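(* Let $A$ be a $\mathbb{Q}$-domain, $K=\operatorname{frac}(A)$, $B=A^{[n]}$ and $D\in \operatorname{LND}_A(B)$. Let $D_K$ denote the extension of $D$ to $K\otimes_A B=K^{[n]}$. Assume that $\operatorname{rank} D=\operatorname{rank} D_K$. If $D_K$ is rigid, then $D$ is rigid.
   Context: All rings are commutative integral domains containing $\mathbb{Q}$. For a ring $A$, $A^{[n]}$ denotes an $A$-algebra isomorphic to the polynomial ring in $n$ variables over $A$. If $B=A^{[n]}$, a coordinate system of $B$ over $A$ is an ordered $n$-tuple $(X_1,\dots,X_n)$ of elements of $B$ with $A[X_1,\dots,X_n]=B$; $\Gamma(B)$ denotes the set of all such. An $A$-derivation $D$ of $B$ is locally nilpotent if for every $x\in B$ there is $s>0$ with $D^s(x)=0$; $\operatorname{LND}_A(B)$ is the set of locally nilpotent $A$-derivations of $B$. The rank of $D$ is the least integer $r\ge 0$ such that there is a coordinate system $(X_1,\dots,X_n)$ of $B$ over $A$ with $A[X_1,\dots,X_{n-r}]\subset\ker D$. For $D$ of rank $r$, $\Gamma_D(B)$ is the set of $(X_1,\dots,X_n)\in\Gamma(B)$ with $A[X_1,\dots,X_{n-r}]\subset \ker D$. $D$ is rigid if $A[X_1,\dots,X_{n-r}]=A[X_1',\dots,X_{n-r}']$ whenever $(X_1,\dots,X_n)$ and $(X_1',\dots,X_n')$ both belong to $\Gamma_D(B)$. (The same definitions apply over $K$ to $D_K$.) *)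

theory Defs
  imports Complex_Main
begin

text \<open>Everything lives inside an ambient field F (type 'a).  Multi-indices are functions nat \<Rightarrow> nat; a "coordinate
  tuple" is X :: nat \<Rightarrow> 'a, only X 0, ..., X (n-1) matter
  (the paper's X_1..X_n are our X 0 .. X (n-1)).\<close>

definition is_subring :: "'a::field set \<Rightarrow> bool" where
  "is_subring R \<longleftrightarrow> 0 \<in> R \<and> 1 \<in> R \<and> (\<forall>x\<in>R. \<forall>y\<in>R. x + y \<in> R \<and> x - y \<in> R \<and> x * y \<in> R)"

definition monom :: "(nat \<Rightarrow> 'a::field) \<Rightarrow> nat \<Rightarrow> (nat \<Rightarrow> nat) \<Rightarrow> 'a" where
  "monom X k \<alpha> = (\<Prod>i<k. X i ^ \<alpha> i)"

definition mindices :: "nat \<Rightarrow> (nat \<Rightarrow> nat) set" where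
  "mindices k = {\<alpha>. \<forall>i\<ge>k. \<alpha> i = 0}"

definition alg_span :: "'a::field set \<Rightarrow> (nat \<Rightarrow> 'a) \<Rightarrow> nat \<Rightarrow> 'a set" where
  "alg_span R X k = {z. \<exists>S c. finite S \<and> S \<subseteq> mindices k \<and> (\<forall>\<alpha>\<in>S. c \<alpha> \<in> R) \<and>
      z = (\<Sum>\<alpha>\<in>S. c \<alpha> * monom X k \<alpha>)}"

definition alg_indep :: "'a::field set \<Rightarrow> (nat \<Rightarrow> 'a) \<Rightarrow> nat \<Rightarrow> bool" where
  "alg_indep R X k \<longleftrightarrow> (\<forall>S c. finite S \<and> S \<subseteq> mindices k \<and> (\<forall>\<alpha>\<in>S. c \<alpha> \<in> R) \<and>
      (\<Sum>\<alpha>\<in>S. c \<alpha> * monom X k \<alpha>) = 0 \<longrightarrow> (\<forall>\<alpha>\<in>S. c \<alpha> = 0))"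

definition coord_sys :: "'a::field set \<Rightarrow> 'a set \<Rightarrow> nat \<Rightarrow> (nat \<Rightarrow> 'a) \<Rightarrow> bool" where
  "coord_sys R B n X \<longleftrightarrow> alg_span R X n = B \<and> alg_indep R X n"

definition is_lnd :: "'a::field set \<Rightarrow> 'a set \<Rightarrow> ('a \<Rightarrow> 'a) \<Rightarrow> bool" where
  "is_lnd R B D \<longleftrightarrow> (\<forall>x\<in>B. D x \<in> B) \<and>
     (\<forall>x\<in>B. \<forall>y\<in>B. D (x + y) = D x + D y \<and> D (x * y) = x * D y + y * D x) \<and>
     (\<forall>a\<in>R. D a = 0) \<and>
     (\<forall>x\<in>B. \<exists>s>0. (D ^^ s) x = 0)"

definition ker_on :: "'a set \<Rightarrow> ('a \<Rightarrow> 'a::zero) \<Rightarrow> 'a set" where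
  "ker_on B D = {x\<in>B. D x = 0}"

definition lnd_rank :: "'a::field set \<Rightarrow> 'a set \<Rightarrow> nat \<Rightarrow> ('a \<Rightarrow> 'a) \<Rightarrow> nat" where
  "lnd_rank R B n D = (LEAST r. \<exists>X. coord_sys R B n X \<and> alg_span R X (n - r) \<subseteq> ker_on B D)"

definition Gamma_D :: "'a::field set \<Rightarrow> 'a set \<Rightarrow> nat \<Rightarrow> ('a \<Rightarrow> 'a) \<Rightarrow> (nat \<Rightarrow> 'a) set" where
  "Gamma_D R B n D = {X. coord_sys R B n X \<and> alg_span R X (n - lnd_rank R B n D) \<subseteq> ker_on B D}"

definition rigid :: "'a::field set \<Rightarrow> 'a set \<Rightarrow> nat \<Rightarrow> ('a \<Rightarrow> 'a) \<Rightarrow> bool" where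
  "rigid R B n D \<longleftrightarrow> (\<forall>X\<in>Gamma_D R B n D. \<forall>Y\<in>Gamma_D R B n D.
      alg_span R X (n - lnd_rank R B n D) = alg_span R Y (n - lnd_rank R B n D))"

text \<open>Fraction field of A inside the ambient field, and K \<otimes>_A B = S^{-1} B, S = A - {0}.\<close>
definition frac_set :: "'a::field set \<Rightarrow> 'a set" where
  "frac_set A = {a / s | a s. a \<in> A \<and> s \<in> A \<and> s \<noteq> 0}"

definition loc_set :: "'a::field set \<Rightarrow> 'a set \<Rightarrow> 'a set" where
  "loc_set A B = {b / s | b s. b \<in> B \<and> s \<in> A \<and> s \<noteq> 0}"

definition frac_ext :: "'a::field set \<Rightarrow> 'a set \<Rightarrow> ('a \<Rightarrow> 'a) \<Rightarrow> 'a \<Rightarrow> 'a" where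
  "frac_ext A B D z = (SOME w. \<exists>b s. b \<in> B \<and> s \<in> A \<and> s \<noteq> 0 \<and> z = b / s \<and> w = D b / s)"

end

theory Submission
  imports Defs
begin

text \<open>A coordinate system X of B over A is also one of K \<otimes>_A B over K, and the
  relation D_K (b/s) = D b / s shows that it is adapted to D_K whenever it is
  adapted to D; by the equality of ranks, \<Gamma>_D(B) \<subseteq> \<Gamma>_{D_K}(K \<otimes>_A B).
  Moreover A[X_1,...,X_k] = B \<inter> K[X_1,...,X_k]: if s y lies in A[X_1,...,X_k]
  for some y \<in> B and 0 \<noteq> s \<in> A, comparing coefficients in the basis of
  monomials in X shows that every monomial of y involving X_{k+1},...,X_n has
  coefficient 0.  So for X, Y \<in> \<Gamma>_D(B), rigidity of D_K gives
  K[X_1,...,X_k] = K[Y_1,...,Y_k], and intersecting with B gives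
  A[X_1,...,X_k] = A[Y_1,...,Y_k].\<close>

lemma monom_mindices_eq:
  assumes "\<alpha> \<in> mindices k" "k \<le> n"
  shows "monom X n \<alpha> = monom X k \<alpha>"
  unfolding monom_def
  by (rule prod.mono_neutral_right) (use assms in \<open>auto simp: mindices_def\<close>)

lemma mindices_mono: "k \<le> n \<Longrightarrow> mindices k \<subseteq> mindices n"
  by (auto simp: mindices_def)

lemma alg_spanI:
  assumes "finite S" "S \<subseteq> mindices k" "\<forall>\<alpha>\<in>S. c \<alpha> \<in> R"
    "z = (\<Sum>\<alpha>\<in>S. c \<alpha> * monom X k \<alpha>)"
  shows "z \<in> alg_span R X k"
  unfolding alg_span_def using assms by blast

lemma alg_spanE:
  assumes "z \<in> alg_span R X k"
  obtains S c where "finite S" "S \<subseteq> mindices k" "\<forall>\<alpha>\<in>S. c \<alpha> \<in> R"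
    "z = (\<Sum>\<alpha>\<in>S. c \<alpha> * monom X k \<alpha>)"
  using assms unfolding alg_span_def by blast

lemma alg_span_const:
  assumes "a \<in> R"
  shows "a \<in> alg_span R X k"
proof -
  have a: "a = (\<Sum>\<alpha>\<in>{\<lambda>_. 0}. (\<lambda>_. a) \<alpha> * monom X k \<alpha>)" by (simp add: monom_def)
  show ?thesis using assms by (intro alg_spanI[OF _ _ _ a]) (auto simp: mindices_def)
qed

lemma alg_span_mono_index:
  assumes "k \<le> n"
  shows "alg_span R X k \<subseteq> alg_span R X n"
proof
  fix z assume "z \<in> alg_span R X k"
  then obtain S c where S: "finite S" "S \<subseteq> mindices k" "\<forall>\<alpha>\<in>S. c \<alpha> \<in> R"
    and z: "z = (\<Sum>\<alpha>\<in>S. c \<alpha> * monom X k \<alpha>)"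
    by (rule alg_spanE)
  have "\<forall>\<alpha>\<in>S. monom X n \<alpha> = monom X k \<alpha>"
    using S(2) monom_mindices_eq[OF _ assms] by blast
  then have "z = (\<Sum>\<alpha>\<in>S. c \<alpha> * monom X n \<alpha>)" unfolding z by simp
  then show "z \<in> alg_span R X n"
    using S mindices_mono[OF assms] by (intro alg_spanI) auto
qed

lemma coord_sys_subset: "coord_sys R B n X \<Longrightarrow> R \<subseteq> B"
  using alg_span_const unfolding coord_sys_def by blast

lemma alg_indep_coeff_eq_0:
  assumes R: "is_subring R" and ind: "alg_indep R X n"
    and S: "finite S" "S \<subseteq> mindices n" "\<forall>\<alpha>\<in>S. c \<alpha> \<in> R"
    and T: "finite T" "T \<subseteq> mindices n" "\<forall>\<alpha>\<in>T. d \<alpha> \<in> R"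
    and eq: "(\<Sum>\<alpha>\<in>S. c \<alpha> * monom X n \<alpha>) = (\<Sum>\<alpha>\<in>T. d \<alpha> * monom X n \<alpha>)"
    and \<alpha>: "\<alpha> \<in> S - T"
  shows "c \<alpha> = 0"
proof -
  define e where "e \<beta> = (if \<beta> \<in> S then c \<beta> else 0) - (if \<beta> \<in> T then d \<beta> else 0)" for \<beta>
  have fin: "finite (S \<union> T)" using S T by simp
  have "(\<Sum>\<beta>\<in>S \<union> T. e \<beta> * monom X n \<beta>)
      = (\<Sum>\<beta>\<in>S \<union> T. if \<beta> \<in> S then c \<beta> * monom X n \<beta> else 0)
        - (\<Sum>\<beta>\<in>S \<union> T. if \<beta> \<in> T then d \<beta> * monom X n \<beta> else 0)"
    unfolding e_def sum_subtractf[symmetric] by (intro sum.cong) (auto simp: left_diff_distrib)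
  also have "\<dots> = (\<Sum>\<beta>\<in>S. c \<beta> * monom X n \<beta>) - (\<Sum>\<beta>\<in>T. d \<beta> * monom X n \<beta>)"
    using fin by (simp add: sum.inter_restrict[symmetric] Int_absorb1)
  also have "\<dots> = 0" using eq by simp
  finally have "(\<Sum>\<beta>\<in>S \<union> T. e \<beta> * monom X n \<beta>) = 0" .
  moreover have "\<forall>\<beta>\<in>S \<union> T. e \<beta> \<in> R"
    using S T R unfolding e_def is_subring_def by auto
  ultimately have "\<forall>\<beta>\<in>S \<union> T. e \<beta> = 0"
    using ind fin S(2) T(2) unfolding alg_indep_def by blast
  then have "e \<alpha> = 0" using \<alpha> by blast
  then show ?thesis using \<alpha> unfolding e_def by simp
qed

lemma frac_set_common_denominator:
  assumes A: "is_subring A" and "finite S" "\<forall>\<alpha>\<in>S. c \<alpha> \<in> frac_set A"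
  shows "\<exists>s\<in>A. s \<noteq> 0 \<and> (\<forall>\<alpha>\<in>S. s * c \<alpha> \<in> A)"
  using assms(2,3)
proof (induction S rule: finite_induct)
  case empty
  then show ?case using A unfolding is_subring_def by (intro bexI[of _ 1]) auto
next
  case (insert \<beta> F)
  then obtain s where s: "s \<in> A" "s \<noteq> 0" "\<forall>\<alpha>\<in>F. s * c \<alpha> \<in> A" by auto
  from insert obtain a t where at: "a \<in> A" "t \<in> A" "t \<noteq> 0" "c \<beta> = a / t"
    unfolding frac_set_def by auto
  have "s * t * c \<beta> \<in> A"
    using s(1) at A unfolding is_subring_def by simp
  moreover have "s * t * c \<alpha> \<in> A" if "\<alpha> \<in> F" for \<alpha>
  proof -
    have "t * (s * c \<alpha>) \<in> A" using s(3) that at(2) A unfolding is_subring_def by blast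
    then show ?thesis by (simp add: ac_simps)
  qed
  ultimately have "\<forall>\<alpha>\<in>insert \<beta> F. s * t * c \<alpha> \<in> A" by blast
  moreover have "s * t \<in> A" "s * t \<noteq> 0" using s at A unfolding is_subring_def by auto
  ultimately show ?case by blast
qed

lemma alg_span_frac_setE:
  assumes A: "is_subring A" and "z \<in> alg_span (frac_set A) X k"
  obtains b s where "b \<in> alg_span A X k" "s \<in> A" "s \<noteq> 0" "z = b / s"
proof -
  obtain S c where S: "finite S" "S \<subseteq> mindices k" "\<forall>\<alpha>\<in>S. c \<alpha> \<in> frac_set A"
    and z: "z = (\<Sum>\<alpha>\<in>S. c \<alpha> * monom X k \<alpha>)"
    using assms(2) by (rule alg_spanE)
  obtain s where s: "s \<in> A" "s \<noteq> 0" "\<forall>\<alpha>\<in>S. s * c \<alpha> \<in> A"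
    using frac_set_common_denominator[OF A S(1,3)] by blast
  have "s * z = (\<Sum>\<alpha>\<in>S. (s * c \<alpha>) * monom X k \<alpha>)"
    unfolding z by (simp add: sum_distrib_left ac_simps)
  then have "s * z \<in> alg_span A X k" using S s by (intro alg_spanI) auto
  moreover have "z = (s * z) / s" using s by simp
  ultimately show ?thesis using s that by blast
qed

lemma alg_span_divide_frac_set:
  assumes A: "is_subring A" and "b \<in> alg_span A X k" "s \<in> A" "s \<noteq> 0"
  shows "b / s \<in> alg_span (frac_set A) X k"
proof -
  obtain S c where S: "finite S" "S \<subseteq> mindices k" "\<forall>\<alpha>\<in>S. c \<alpha> \<in> A"
    and b: "b = (\<Sum>\<alpha>\<in>S. c \<alpha> * monom X k \<alpha>)"
    using assms(2) by (rule alg_spanE)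
  have "b / s = (\<Sum>\<alpha>\<in>S. (c \<alpha> / s) * monom X k \<alpha>)"
    unfolding b by (simp add: sum_divide_distrib)
  moreover have "\<forall>\<alpha>\<in>S. c \<alpha> / s \<in> frac_set A"
    using S assms(3,4) unfolding frac_set_def by blast
  ultimately show ?thesis using S by (intro alg_spanI) auto
qed

lemma alg_span_subset_frac_set:
  assumes "is_subring A"
  shows "alg_span A X k \<subseteq> alg_span (frac_set A) X k"
  using alg_span_divide_frac_set[OF assms, where s = 1] assms
  unfolding is_subring_def by fastforce

lemma alg_indep_frac_set:
  assumes A: "is_subring A" and ind: "alg_indep A X k"
  shows "alg_indep (frac_set A) X k"
  unfolding alg_indep_def
proof (intro allI impI)
  fix S c
  assume H: "finite S \<and> S \<subseteq> mindices k \<and> (\<forall>\<alpha>\<in>S. c \<alpha> \<in> frac_set A) \<and>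
      (\<Sum>\<alpha>\<in>S. c \<alpha> * monom X k \<alpha>) = 0"
  obtain s where s: "s \<in> A" "s \<noteq> 0" "\<forall>\<alpha>\<in>S. s * c \<alpha> \<in> A"
    using frac_set_common_denominator[OF A] H by blast
  have "(\<Sum>\<alpha>\<in>S. (s * c \<alpha>) * monom X k \<alpha>) = s * (\<Sum>\<alpha>\<in>S. c \<alpha> * monom X k \<alpha>)"
    by (simp add: sum_distrib_left ac_simps)
  then have "(\<Sum>\<alpha>\<in>S. (s * c \<alpha>) * monom X k \<alpha>) = 0" using H by simp
  then show "\<forall>\<alpha>\<in>S. c \<alpha> = 0"
    using ind[unfolded alg_indep_def, rule_format, of S "\<lambda>\<alpha>. s * c \<alpha>"] H s by simp
qed

lemma coord_sys_loc_set:
  assumes A: "is_subring A" and cs: "coord_sys A B n X"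
  shows "coord_sys (frac_set A) (loc_set A B) n X"
proof -
  have span: "alg_span A X n = B" and ind: "alg_indep A X n"
    using cs unfolding coord_sys_def by auto
  have "alg_span (frac_set A) X n = loc_set A B"
  proof
    show "alg_span (frac_set A) X n \<subseteq> loc_set A B"
      using alg_span_frac_setE[OF A] span unfolding loc_set_def by blast
    show "loc_set A B \<subseteq> alg_span (frac_set A) X n"
      using alg_span_divide_frac_set[OF A] span unfolding loc_set_def by blast
  qed
  then show ?thesis using alg_indep_frac_set[OF A ind] unfolding coord_sys_def by simp
qed

lemma frac_ext_divide:
  assumes D: "is_lnd A B D" and AB: "A \<subseteq> B"
    and b: "b \<in> B" and s: "s \<in> A" "s \<noteq> 0"
  shows "frac_ext A B D (b / s) = D b / s"
proof -
  let ?P = "\<lambda>w. \<exists>b' s'. b' \<in> B \<and> s' \<in> A \<and> s' \<noteq> 0 \<and> b / s = b' / s' \<and> w = D b' / s'"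
  have "\<exists>w. ?P w" using b s by blast
  then have "?P (SOME w. ?P w)" by (rule someI_ex)
  then obtain b' s' where H: "b' \<in> B" "s' \<in> A" "s' \<noteq> 0" "b / s = b' / s'"
    and w: "(SOME w. ?P w) = D b' / s'"
    by blast
  have Dmult: "D (x * a) = a * D x" if "x \<in> B" "a \<in> A" for x a
  proof -
    have "a \<in> B" using AB that(2) by blast
    then have "D (x * a) = x * D a + a * D x" using D that(1) unfolding is_lnd_def by blast
    moreover have "D a = 0" using D that(2) unfolding is_lnd_def by blast
    ultimately show ?thesis by simp
  qed
  have "s' * D b = D (b * s')" using Dmult[OF b H(2)] by simp
  also have "b * s' = b' * s" using H(3,4) s(2) by (simp add: field_simps)
  also have "D (b' * s) = s * D b'" using Dmult[OF H(1) s(1)] .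
  finally have "s' * D b = s * D b'" .
  then have "D b / s = D b' / s'" using H(3) s(2) by (simp add: field_simps)
  then show ?thesis unfolding frac_ext_def using w by simp
qed

lemma coord_sys_alg_span_eq_Int_frac_set:
  assumes A: "is_subring A" and cs: "coord_sys A B n X" and kn: "k \<le> n"
  shows "alg_span A X k = B \<inter> alg_span (frac_set A) X k"
proof
  have "alg_span A X n = B" using cs unfolding coord_sys_def by blast
  then show "alg_span A X k \<subseteq> B \<inter> alg_span (frac_set A) X k"
    using alg_span_mono_index[OF kn] alg_span_subset_frac_set[OF A] by blast
next
  show "B \<inter> alg_span (frac_set A) X k \<subseteq> alg_span A X k"
  proof
    fix y assume "y \<in> B \<inter> alg_span (frac_set A) X k"
    then have yB: "y \<in> B" and yK: "y \<in> alg_span (frac_set A) X k" by auto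
    have ind: "alg_indep A X n" and "y \<in> alg_span A X n"
      using cs yB unfolding coord_sys_def by auto
    then obtain S a where S: "finite S" "S \<subseteq> mindices n" "\<forall>\<alpha>\<in>S. a \<alpha> \<in> A"
      and y: "y = (\<Sum>\<alpha>\<in>S. a \<alpha> * monom X n \<alpha>)"
      by (auto elim: alg_spanE)
    obtain b s where bs: "b \<in> alg_span A X k" "s \<in> A" "s \<noteq> 0" "y = b / s"
      using alg_span_frac_setE[OF A yK] .
    obtain T c where T: "finite T" "T \<subseteq> mindices k" "\<forall>\<alpha>\<in>T. c \<alpha> \<in> A"
      and b: "b = (\<Sum>\<alpha>\<in>T. c \<alpha> * monom X k \<alpha>)"
      using bs(1) by (rule alg_spanE)
    have "(\<Sum>\<alpha>\<in>S. (s * a \<alpha>) * monom X n \<alpha>) = s * y"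
      unfolding y by (simp add: sum_distrib_left ac_simps)
    also have "\<dots> = b" using bs(3,4) by simp
    also have "\<dots> = (\<Sum>\<alpha>\<in>T. c \<alpha> * monom X n \<alpha>)"
    proof -
      have "\<forall>\<alpha>\<in>T. monom X n \<alpha> = monom X k \<alpha>"
        using T(2) monom_mindices_eq[OF _ kn] by blast
      then show ?thesis unfolding b by simp
    qed
    finally have eq: "(\<Sum>\<alpha>\<in>S. (s * a \<alpha>) * monom X n \<alpha>) = (\<Sum>\<alpha>\<in>T. c \<alpha> * monom X n \<alpha>)" .
    have "\<forall>\<alpha>\<in>S. s * a \<alpha> \<in> A" using S(3) bs(2) A unfolding is_subring_def by blast
    moreover have "T \<subseteq> mindices n" using T(2) mindices_mono[OF kn] by blast
    ultimately have "s * a \<alpha> = 0" if "\<alpha> \<in> S - T" for \<alpha>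
      using alg_indep_coeff_eq_0[OF A ind S(1,2) _ T(1) _ T(3) eq that] by blast
    then have a0: "\<forall>\<alpha>\<in>S - mindices k. a \<alpha> = 0" using T(2) bs(3) by auto
    have "y = (\<Sum>\<alpha>\<in>S \<inter> mindices k. a \<alpha> * monom X n \<alpha>)"
      unfolding y using S(1) a0 by (intro sum.mono_neutral_right) auto
    also have "\<dots> = (\<Sum>\<alpha>\<in>S \<inter> mindices k. a \<alpha> * monom X k \<alpha>)"
    proof -
      have "\<forall>\<alpha>\<in>S \<inter> mindices k. monom X n \<alpha> = monom X k \<alpha>"
        using monom_mindices_eq[OF _ kn] by blast
      then show ?thesis by simp
    qed
    finally show "y \<in> alg_span A X k" using S by (intro alg_spanI) auto
  qed
qed

lemma Gamma_D_subset_frac_ext: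
  assumes A: "is_subring A" and D: "is_lnd A B D"
    and rank: "lnd_rank A B n D = lnd_rank (frac_set A) (loc_set A B) n (frac_ext A B D)"
  shows "Gamma_D A B n D \<subseteq> Gamma_D (frac_set A) (loc_set A B) n (frac_ext A B D)"
proof
  fix X assume "X \<in> Gamma_D A B n D"
  then have cs: "coord_sys A B n X"
    and ker: "alg_span A X (n - lnd_rank A B n D) \<subseteq> ker_on B D"
    unfolding Gamma_D_def by auto
  have "alg_span (frac_set A) X (n - lnd_rank A B n D) \<subseteq> ker_on (loc_set A B) (frac_ext A B D)"
  proof
    fix z assume "z \<in> alg_span (frac_set A) X (n - lnd_rank A B n D)"
    then obtain b s where bs: "b \<in> alg_span A X (n - lnd_rank A B n D)" "s \<in> A" "s \<noteq> 0"
      "z = b / s"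
      using A by (auto elim: alg_span_frac_setE)
    have "b \<in> B" "D b = 0" using bs(1) ker unfolding ker_on_def by auto
    moreover have "frac_ext A B D z = D b / s"
      unfolding bs(4) by (rule frac_ext_divide[OF D coord_sys_subset[OF cs] \<open>b \<in> B\<close> bs(2,3)])
    ultimately show "z \<in> ker_on (loc_set A B) (frac_ext A B D)"
      using bs unfolding ker_on_def loc_set_def by auto
  qed
  then show "X \<in> Gamma_D (frac_set A) (loc_set A B) n (frac_ext A B D)"
    using coord_sys_loc_set[OF A cs] rank unfolding Gamma_D_def by simp
qed

theorem theorem1p2:
  fixes A B :: "'a::field_char_0 set" and n :: nat and D :: "'a \<Rightarrow> 'a"
  assumes "is_subring A"
    and "\<rat> \<subseteq> A"
    and "\<exists>X. coord_sys A B n X"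
    and "is_lnd A B D"
    and "lnd_rank A B n D = lnd_rank (frac_set A) (loc_set A B) n (frac_ext A B D)"
    and "rigid (frac_set A) (loc_set A B) n (frac_ext A B D)"
  shows "rigid A B n D"
  unfolding rigid_def
proof (intro ballI)
  fix X Y assume X: "X \<in> Gamma_D A B n D" and Y: "Y \<in> Gamma_D A B n D"
  let ?k = "n - lnd_rank A B n D"
  have "alg_span (frac_set A) X ?k = alg_span (frac_set A) Y ?k"
    using assms(6) Gamma_D_subset_frac_ext[OF assms(1,4,5)] X Y assms(5)
    unfolding rigid_def by auto
  moreover have "coord_sys A B n X" "coord_sys A B n Y"
    using X Y unfolding Gamma_D_def by auto
  ultimately show "alg_span A X ?k = alg_span A Y ?k"
    using coord_sys_alg_span_eq_Int_frac_set[OF assms(1)] by simp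
qed

end
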